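(* Let $n\ge1$, $1\le M\le 2^{n-1}$, $a:=M/2^n$, and let $f:\{-1,1\}^n\to\{-1,1\}$ satisfy $|f^{-1}(1)|=M$. Then \[ \mathbf{W}_1\le 8a^{2}\varphi(a),\qquad \varphi(a):=\begin{cases}\frac{1}{\sqrt{a}}-1, & 0< a\le\frac14,\\[2pt] \frac{1}{4a}, & \frac14<a\le\frac12.\end{cases} \]
   Context: For $f:\{-1,1\}^n\to\{-1,1\}$ and $S\subseteq[1:n]$, the Fourier coefficient is $\hat f_S:=\mathbb{E}_{\mathbf{x}\sim\mathrm{Unif}\{-1,1\}^n}[f(\mathbf{x})\prod_{i\in S}x_i]$, and the degree-$m$ Fourier weight is $\mathbf{W}_m:=\sum_{S:|S|=m}\hat f_S^{2}$. *)

theory Defs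
  imports "HOL-Analysis.Analysis"
begin

text \<open>The Boolean cube {-1,1}^n, points as extensional functions on {0..<n}
  (coordinate i of the paper is index i-1 here).\<close>
definition cube :: "nat \<Rightarrow> (nat \<Rightarrow> real) set" where
  "cube n = PiE {..<n} (\<lambda>_. {-1, 1})"

definition fourier_coeff :: "nat \<Rightarrow> ((nat \<Rightarrow> real) \<Rightarrow> real) \<Rightarrow> nat set \<Rightarrow> real" where
  "fourier_coeff n f S = (\<Sum>x\<in>cube n. f x * (\<Prod>i\<in>S. x i)) / 2 ^ n"

definition fourier_weight :: "nat \<Rightarrow> ((nat \<Rightarrow> real) \<Rightarrow> real) \<Rightarrow> nat \<Rightarrow> real" where
  "fourier_weight n f m = (\<Sum>S\<in>{S. S \<subseteq> {..<n} \<and> card S = m}. (fourier_coeff n f S)^2)"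

definition phi :: "real \<Rightarrow> real" where
  "phi a = (if a \<le> 1/4 then 1 / sqrt a - 1 else 1 / (4 * a))"

end

theory Submission
  imports Defs
begin

text \<open>For A = f^-1(1), sum the noise kernel K_c(x,y) = prod_i (1 + c x_i y_i) over A x A.
  Expanding the product, this sum is sum_T c^|T| S_T with S_T = (sum_{x in A} prod_{i in T} x_i)^2 >= 0.
  For c = 1 the kernel is 2^n times the diagonal, giving 2^n |A| = |A|^2 + S_1 + S_{>=2};
  for c = -r with 0 <= r <= 1 the kernel is nonnegative, giving 0 <= |A|^2 - r S_1 + r^2 S_{>=2}.
  Eliminating S_{>=2} yields r(1+r) S_1 <= |A|^2 (1 - r^2) + r^2 2^n |A|, where W_1 = 4 S_1 / 4^n.
  The bound follows by choosing r = sqrt a / (1 - sqrt a) when a <= 1/4 and r = 1 otherwise.\<close>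

definition character :: "nat set \<Rightarrow> (nat \<Rightarrow> real) \<Rightarrow> real" where
  "character T x = (\<Prod>i\<in>T. x i)"

lemma prod_one_plus_eq_sum_Pow:
  fixes c :: real
  assumes "finite I"
  shows "(\<Prod>i\<in>I. 1 + c * (x i * y i))
       = (\<Sum>T\<in>Pow I. c ^ card T * (character T x * character T y))"
proof -
  have "(\<Prod>i\<in>I. 1 + c * (x i * y i)) = (\<Prod>i\<in>I. c * (x i * y i) + 1)"
    by (simp add: add.commute)
  also have "\<dots> = (\<Sum>T\<in>Pow I. (\<Prod>i\<in>T. c * (x i * y i)) * (\<Prod>i\<in>I - T. 1))"
    using assms by (rule prod_add)
  also have "\<dots> = (\<Sum>T\<in>Pow I. c ^ card T * (character T x * character T y))"
    by (simp add: character_def prod.distrib)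
  finally show ?thesis .
qed

lemma sum_sum_kernel_eq_sum_squares:
  fixes c :: real and A :: "(nat \<Rightarrow> real) set"
  assumes "finite A" "finite I"
  shows "(\<Sum>x\<in>A. \<Sum>y\<in>A. \<Prod>i\<in>I. 1 + c * (x i * y i))
       = (\<Sum>T\<in>Pow I. c ^ card T * (\<Sum>x\<in>A. character T x)\<^sup>2)"
proof -
  have "(\<Sum>x\<in>A. \<Sum>y\<in>A. \<Prod>i\<in>I. 1 + c * (x i * y i))
      = (\<Sum>x\<in>A. \<Sum>y\<in>A. \<Sum>T\<in>Pow I. c ^ card T * (character T x * character T y))"
    using assms(2) by (simp add: prod_one_plus_eq_sum_Pow)
  also have "\<dots> = (\<Sum>T\<in>Pow I. \<Sum>x\<in>A. \<Sum>y\<in>A. c ^ card T * (character T x * character T y))"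
    by (subst sum.swap) (simp add: sum.swap[of _ A "Pow I"])
  also have "\<dots> = (\<Sum>T\<in>Pow I. c ^ card T * (\<Sum>x\<in>A. character T x)\<^sup>2)"
    by (simp add: power2_eq_square sum_distrib_left sum_distrib_right mult_ac)
  finally show ?thesis .
qed

lemma sum_Pow_split_card:
  assumes "finite I"
  shows "(\<Sum>T\<in>Pow I. g T) = g {} + (\<Sum>i\<in>I. g {i}) + (\<Sum>T | T \<subseteq> I \<and> 2 \<le> card T. g T)"
proof -
  let ?H = "{T. T \<subseteq> I \<and> 2 \<le> card T}"
  have "Pow I = insert {} ((\<lambda>i. {i}) ` I \<union> ?H)"
  proof (intro equalityI subsetI)
    fix T assume "T \<in> Pow I"
    then have "T \<subseteq> I" "finite T" using assms finite_subset by auto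
    then consider "card T = 0" | "card T = 1" | "2 \<le> card T" by linarith
    then show "T \<in> insert {} ((\<lambda>i. {i}) ` I \<union> ?H)"
    proof cases
      case 2
      then obtain i where "T = {i}" by (rule card_1_singletonE)
      then show ?thesis using \<open>T \<subseteq> I\<close> by auto
    qed (use \<open>T \<subseteq> I\<close> \<open>finite T\<close> in auto)
  qed auto
  moreover have "finite ?H" using assms by (auto intro: finite_subset[of _ "Pow I"])
  moreover have "(\<lambda>i. {i}) ` I \<inter> ?H = {}" "{} \<notin> (\<lambda>i. {i}) ` I \<union> ?H" by auto
  ultimately show ?thesis
    using assms by (simp add: sum.union_disjoint sum.reindex inj_on_def add.assoc)
qed

lemma cube_coord: "x \<in> cube n \<Longrightarrow> i < n \<Longrightarrow> x i = -1 \<or> x i = 1"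
  by (auto simp: cube_def PiE_def Pi_def)

lemma cube_neqE:
  assumes "x \<in> cube n" "y \<in> cube n" "x \<noteq> y"
  obtains i where "i < n" "x i \<noteq> y i"
  using assms PiE_ext unfolding cube_def by (metis lessThan_iff)

lemma finite_cube: "finite (cube n)"
  unfolding cube_def by (rule finite_PiE) auto

lemma sum_cube_coord_eq_0:
  assumes "i < n"
  shows "(\<Sum>x\<in>cube n. x i) = 0"
proof -
  let ?flip = "\<lambda>x. x(i := - x i)"
  have flip_cube: "?flip x \<in> cube n" if "x \<in> cube n" for x
    using that assms by (auto simp: cube_def PiE_def Pi_def extensional_def)
  have "(\<Sum>x\<in>cube n. x i) = (\<Sum>x\<in>cube n. - x i)"
    by (rule sum.reindex_bij_witness[of _ ?flip ?flip]) (auto simp: flip_cube)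
  then show ?thesis by (simp add: sum_negf)
qed

lemma cube_kernel_diagonal:
  assumes "x \<in> cube n" "y \<in> cube n"
  shows "(\<Prod>i<n. 1 + x i * y i) = (if x = y then 2 ^ n else (0::real))"
proof (cases "x = y")
  case True
  then have "(\<Prod>i<n. 1 + x i * y i) = (\<Prod>i<n. (2::real))"
    using cube_coord[OF assms(1)] by (intro prod.cong) fastforce+
  then show ?thesis using True by simp
next
  case False
  then obtain i where i: "i < n" "x i \<noteq> y i" using cube_neqE assms by blast
  then have "1 + x i * y i = 0" using cube_coord[OF assms(1) i(1)] cube_coord[OF assms(2) i(1)] by auto
  then show ?thesis using False i(1) by (simp add: prod_zero_iff) blast
qed

lemma sum_sum_cube_kernel:
  assumes "A \<subseteq> cube n"
  shows "(\<Sum>x\<in>A. \<Sum>y\<in>A. \<Prod>i<n. 1 + x i * y i) = 2 ^ n * real (card A)"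
proof -
  have "finite A" using assms finite_cube finite_subset by blast
  moreover have "(\<Sum>x\<in>A. \<Sum>y\<in>A. \<Prod>i<n. 1 + x i * y i)
      = (\<Sum>x\<in>A. \<Sum>y\<in>A. if x = y then 2 ^ n else (0::real))"
    using assms by (intro sum.cong refl cube_kernel_diagonal) auto
  ultimately show ?thesis by (simp add: sum.delta)
qed

lemma sum_sum_noise_kernel_nonneg:
  assumes "A \<subseteq> cube n" "\<bar>c\<bar> \<le> (1::real)"
  shows "0 \<le> (\<Sum>x\<in>A. \<Sum>y\<in>A. \<Prod>i<n. 1 + c * (x i * y i))"
proof (intro sum_nonneg prod_nonneg)
  fix x y i assume "x \<in> A" "y \<in> A" "i \<in> {..<n}"
  then have "x i = -1 \<or> x i = 1" "y i = -1 \<or> y i = 1" using assms(1) cube_coord by blast+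
  then show "0 \<le> 1 + c * (x i * y i)" using assms(2) by auto
qed

lemma sum_sum_kernel_by_level:
  fixes c :: real
  assumes "A \<subseteq> cube n"
  shows "(\<Sum>x\<in>A. \<Sum>y\<in>A. \<Prod>i<n. 1 + c * (x i * y i))
     = (real (card A))\<^sup>2 + c * (\<Sum>i<n. (\<Sum>x\<in>A. x i)\<^sup>2)
       + (\<Sum>T | T \<subseteq> {..<n} \<and> 2 \<le> card T. c ^ card T * (\<Sum>x\<in>A. character T x)\<^sup>2)"
proof -
  have "finite A" using assms finite_cube finite_subset by blast
  then show ?thesis
    by (simp add: sum_sum_kernel_eq_sum_squares sum_Pow_split_card character_def sum_distrib_left)
qed

lemma level_one_sum_bound:
  assumes A: "A \<subseteq> cube n" and r: "0 \<le> r" "r \<le> (1::real)"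
  shows "r * (1 + r) * (\<Sum>i<n. (\<Sum>x\<in>A. x i)\<^sup>2)
         \<le> (real (card A))\<^sup>2 * (1 - r\<^sup>2) + r\<^sup>2 * 2 ^ n * real (card A)"
proof -
  define S1 where "S1 = (\<Sum>i<n. (\<Sum>x\<in>A. x i)\<^sup>2)"
  define S2 where "S2 = (\<Sum>T | T \<subseteq> {..<n} \<and> 2 \<le> card T. (\<Sum>x\<in>A. character T x)\<^sup>2)"
  define m where "m = real (card A)"
  have at_one: "2 ^ n * m = m\<^sup>2 + S1 + S2"
    using sum_sum_kernel_by_level[OF A, of 1] sum_sum_cube_kernel[OF A]
    by (simp add: S1_def S2_def m_def)
  have "(\<Sum>T | T \<subseteq> {..<n} \<and> 2 \<le> card T. (-r) ^ card T * (\<Sum>x\<in>A. character T x)\<^sup>2) \<le> r\<^sup>2 * S2"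
    unfolding S2_def sum_distrib_left
  proof (rule sum_mono)
    fix T assume "T \<in> {T. T \<subseteq> {..<n} \<and> 2 \<le> card T}"
    then have "(-r) ^ card T \<le> r\<^sup>2"
      using r power_decreasing[of 2 "card T" r] abs_ge_self[of "(-r) ^ card T"]
      by (simp add: power_abs)
    then show "(-r) ^ card T * (\<Sum>x\<in>A. character T x)\<^sup>2 \<le> r\<^sup>2 * (\<Sum>x\<in>A. character T x)\<^sup>2"
      by (intro mult_right_mono) auto
  qed
  moreover have "0 \<le> m\<^sup>2 - r * S1
      + (\<Sum>T | T \<subseteq> {..<n} \<and> 2 \<le> card T. (-r) ^ card T * (\<Sum>x\<in>A. character T x)\<^sup>2)"
    using sum_sum_kernel_by_level[OF A, of "-r"] sum_sum_noise_kernel_nonneg[OF A, of "-r"] r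
    by (simp add: S1_def m_def)
  ultimately have "0 \<le> m\<^sup>2 - r * S1 + r\<^sup>2 * (2 ^ n * m - m\<^sup>2 - S1)" using at_one by simp
  then show ?thesis unfolding S1_def[symmetric] m_def[symmetric]
    by (simp add: algebra_simps power2_eq_square)
qed

lemma fourier_weight_1_eq: "fourier_weight n f 1 = (\<Sum>i<n. (fourier_coeff n f {i})\<^sup>2)"
proof -
  have "{S. S \<subseteq> {..<n} \<and> card S = 1} = (\<lambda>i. {i}) ` {..<n}"
    by (auto simp: card_1_singleton_iff)
  then show ?thesis unfolding fourier_weight_def by (simp add: sum.reindex inj_on_def)
qed

lemma fourier_coeff_singleton_boolean:
  assumes f: "\<forall>x\<in>cube n. f x \<in> {-1, 1}" and i: "i < n"
  shows "fourier_coeff n f {i} = 2 * (\<Sum>x | x \<in> cube n \<and> f x = 1. x i) / 2 ^ n"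
proof -
  have "(\<Sum>x\<in>cube n. f x * x i) = (\<Sum>x\<in>cube n. 2 * (if f x = 1 then x i else 0) - x i)"
    using f by (intro sum.cong refl) auto
  also have "\<dots> = 2 * (\<Sum>x | x \<in> cube n \<and> f x = 1. x i)"
    using sum_cube_coord_eq_0[OF i] finite_cube
    by (simp add: sum_subtractf sum_distrib_left sum.inter_filter)
  finally show ?thesis unfolding fourier_coeff_def by simp
qed

lemma fourier_weight_1_noise_bound:
  assumes f: "\<forall>x\<in>cube n. f x \<in> {-1, 1}"
    and a: "a = real (card {x\<in>cube n. f x = 1}) / 2 ^ n"
    and r: "0 \<le> r" "r \<le> 1"
  shows "r * (1 + r) * fourier_weight n f 1 / 4 \<le> a\<^sup>2 * (1 - r\<^sup>2) + r\<^sup>2 * a"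
proof -
  define A where "A = {x\<in>cube n. f x = 1}"
  define N :: real where "N = 2 ^ n"
  have "fourier_weight n f 1 = (\<Sum>i<n. 4 * (\<Sum>x\<in>A. x i)\<^sup>2 / N\<^sup>2)"
    unfolding fourier_weight_1_eq
    using fourier_coeff_singleton_boolean[OF f]
    by (intro sum.cong refl) (simp add: A_def N_def power_divide power_mult_distrib)
  then have "fourier_weight n f 1 / 4 * N\<^sup>2 = (\<Sum>i<n. (\<Sum>x\<in>A. x i)\<^sup>2)"
    by (simp add: N_def sum_divide_distrib[symmetric] sum_distrib_left[symmetric])
  moreover have "A \<subseteq> cube n" by (auto simp: A_def)
  ultimately have "r * (1 + r) * (fourier_weight n f 1 / 4 * N\<^sup>2)
      \<le> (a * N)\<^sup>2 * (1 - r\<^sup>2) + r\<^sup>2 * N * (a * N)"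
    using level_one_sum_bound[of A n r] r a by (simp add: A_def N_def)
  then have "N\<^sup>2 * (r * (1 + r) * fourier_weight n f 1 / 4) \<le> N\<^sup>2 * (a\<^sup>2 * (1 - r\<^sup>2) + r\<^sup>2 * a)"
    by (simp add: algebra_simps power2_eq_square)
  then show ?thesis by (simp add: N_def)
qed

lemma le_phi_bound_of_noise_family:
  fixes a w :: real
  assumes a: "0 < a" "a \<le> 1/2"
    and noise: "\<And>r. 0 \<le> r \<Longrightarrow> r \<le> 1 \<Longrightarrow> r * (1 + r) * w / 4 \<le> a\<^sup>2 * (1 - r\<^sup>2) + r\<^sup>2 * a"
  shows "w \<le> 8 * a\<^sup>2 * phi a"
proof (cases "a \<le> 1/4")
  case True
  define s where "s = sqrt a"
  have s: "0 < s" "s \<le> 1/2" "a = s\<^sup>2"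
    using a real_sqrt_le_mono[OF True] by (auto simp: s_def real_sqrt_divide)
  define r where "r = s / (1 - s)"
  have "r * (1 + r) = s / (1 - s)\<^sup>2"
    using s by (simp add: r_def field_simps power2_eq_square)
  moreover have "a\<^sup>2 * (1 - r\<^sup>2) + r\<^sup>2 * a = 2 * s ^ 4 / (1 - s)"
    using s(2) unfolding r_def s(3) by (simp add: field_simps) algebra
  moreover have "r * (1 + r) * w / 4 \<le> a\<^sup>2 * (1 - r\<^sup>2) + r\<^sup>2 * a"
    using s by (intro noise) (auto simp: r_def field_simps)
  ultimately have noise_at_r: "s / (1 - s)\<^sup>2 * (w / 4) \<le> 2 * s ^ 4 / (1 - s)" by simp
  have "w = 4 * (1 - s)\<^sup>2 / s * (s / (1 - s)\<^sup>2 * (w / 4))"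
    using s by (simp add: field_simps)
  also have "\<dots> \<le> 4 * (1 - s)\<^sup>2 / s * (2 * s ^ 4 / (1 - s))"
    using s by (intro mult_left_mono noise_at_r) auto
  also have "\<dots> = 8 * s ^ 3 * (1 - s)"
    using s by (simp add: field_simps power2_eq_square power_def)
  finally have "w \<le> 8 * s ^ 3 * (1 - s)" .
  moreover have "8 * a\<^sup>2 * phi a = 8 * s ^ 3 * (1 - s)"
    using True s by (simp add: phi_def s_def[symmetric] field_simps power_def)
  ultimately show ?thesis by simp
next
  case False
  have "1 * (1 + 1) * w / 4 \<le> a\<^sup>2 * (1 - 1\<^sup>2) + 1\<^sup>2 * a" by (rule noise) auto
  then have "w \<le> 2 * a" by simp
  moreover have "8 * a\<^sup>2 * phi a = 2 * a"
    using False a by (simp add: phi_def field_simps power2_eq_square)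
  ultimately show ?thesis by linarith
qed

theorem corollary1:
  fixes n M :: nat and f :: "(nat \<Rightarrow> real) \<Rightarrow> real"
  assumes "n \<ge> 1"
    and "1 \<le> M" and "M \<le> 2 ^ (n - 1)"
    and "\<forall>x\<in>cube n. f x \<in> {-1, 1}"
    and "card {x\<in>cube n. f x = 1} = M"
  shows "fourier_weight n f 1 \<le> 8 * (real M / 2 ^ n)^2 * phi (real M / 2 ^ n)"
proof (rule le_phi_bound_of_noise_family)
  have "2 * M \<le> 2 ^ n"
    using assms(1,3) by (metis Suc_diff_1 less_le_trans mult_le_mono2 power_Suc zero_less_one le_imp_less_Suc)
  then show "real M / 2 ^ n \<le> 1/2"
    by (simp add: field_simps) (metis of_nat_le_iff of_nat_mult of_nat_numeral of_nat_power)
  show "0 < real M / 2 ^ n" using assms(2) by simp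
  show "r * (1 + r) * fourier_weight n f 1 / 4
      \<le> (real M / 2 ^ n)\<^sup>2 * (1 - r\<^sup>2) + r\<^sup>2 * (real M / 2 ^ n)" if "0 \<le> r" "r \<le> 1" for r
    using fourier_weight_1_noise_bound[OF assms(4) _ that] assms(5) by simp
qed

end
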